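(* For any finite, connected, pointed, edge-ordered graph $G$ with distinguished vertex $v_0$, the graph $S(G)$ (defined below) is an arborescence.
   Context: A (directed) graph is $(V,\to)$ with $\to\subseteq V\times V$; $N(u)$ is the set of outgoing edges of $u$. A pointed graph has a distinguished vertex $v_0$; connected means every vertex is reachable by a path from $v_0$. A path is a finite sequence $v_1\to\cdots\to v_n$ of vertices joined by edges, with length $|\pi|$; co-initial paths share their source; $\pi\sqsubset\sigma$ means $\pi$ is a proper prefix of $\sigma$. A finite edge-ordered graph is a finite graph with a strict linear order $\triangleleft$ on each neighborhood. Lexicographic path order: if $\pi\sqsubset\sigma$ then $\pi\prec\sigma$ (symmetrically); otherwise, with $\zeta$ the longest common prefix, $u$ its target and $v_1,v_2$ the next vertices, $\pi\prec\sigma$ iff $u\to v_1\triangleleft u\to v_2$. $\min^s(u\rightsquigarrow v)$ is the lexicographically least shortest path from $u$ to $v$. An arborescence is a pointed graph such that for every vertex $u$ there is a unique path $v_0\rightsquigarrow u$. $S(G)$ is the graph with the vertices and distinguished vertex of $G$, containing an edge $u\to v$ iff $u\to v$ is an edge of the path $\min^s(v_0\rightsquigarrow v)$ in $G$, with co-initial edges ordered as in $G$. *)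

theory Defs
  imports Main
begin

text \<open>An edge order is given by ord, where ord u v1 v2 means that the edge u -> v1
  precedes the edge u -> v2 in the order on the neighbourhood N(u).\<close>

definition finite_edge_ordered_graph ::
  "'v set \<Rightarrow> ('v \<Rightarrow> 'v \<Rightarrow> bool) \<Rightarrow> ('v \<Rightarrow> 'v \<Rightarrow> 'v \<Rightarrow> bool) \<Rightarrow> bool" where
  "finite_edge_ordered_graph V E ord \<longleftrightarrow>
     finite V \<and> (\<forall>u v. E u v \<longrightarrow> u \<in> V \<and> v \<in> V) \<and>
     (\<forall>u. (\<forall>v. E u v \<longrightarrow> \<not> ord u v v) \<and>
          (\<forall>a b c. E u a \<and> E u b \<and> E u c \<and> ord u a b \<and> ord u b c \<longrightarrow> ord u a c) \<and>
          (\<forall>a b. E u a \<and> E u b \<and> a \<noteq> b \<longrightarrow> ord u a b \<or> ord u b a))"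

definition is_path :: "'v set \<Rightarrow> ('v \<Rightarrow> 'v \<Rightarrow> bool) \<Rightarrow> 'v list \<Rightarrow> bool" where
  "is_path V E p \<longleftrightarrow> p \<noteq> [] \<and> set p \<subseteq> V \<and>
     (\<forall>i. Suc i < length p \<longrightarrow> E (p ! i) (p ! Suc i))"

definition path_from_to :: "'v set \<Rightarrow> ('v \<Rightarrow> 'v \<Rightarrow> bool) \<Rightarrow> 'v \<Rightarrow> 'v \<Rightarrow> 'v list \<Rightarrow> bool" where
  "path_from_to V E u v p \<longleftrightarrow> is_path V E p \<and> hd p = u \<and> last p = v"

definition path_len :: "'v list \<Rightarrow> nat" where
  "path_len p = length p - 1"

definition connected_from :: "'v set \<Rightarrow> ('v \<Rightarrow> 'v \<Rightarrow> bool) \<Rightarrow> 'v \<Rightarrow> bool" where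
  "connected_from V E v0 \<longleftrightarrow> (\<forall>v\<in>V. \<exists>p. path_from_to V E v0 v p)"

definition path_less :: "('v \<Rightarrow> 'v \<Rightarrow> 'v \<Rightarrow> bool) \<Rightarrow> 'v list \<Rightarrow> 'v list \<Rightarrow> bool" where
  "path_less ord p q \<longleftrightarrow>
     (\<exists>r. r \<noteq> [] \<and> q = p @ r) \<or>
     (\<exists>z v1 v2 r1 r2. z \<noteq> [] \<and> v1 \<noteq> v2 \<and> p = z @ v1 # r1 \<and> q = z @ v2 # r2 \<and>
         ord (last z) v1 v2)"

definition shortest_path :: "'v set \<Rightarrow> ('v \<Rightarrow> 'v \<Rightarrow> bool) \<Rightarrow> 'v \<Rightarrow> 'v \<Rightarrow> 'v list \<Rightarrow> bool" where
  "shortest_path V E u v p \<longleftrightarrow> path_from_to V E u v p \<and>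
     (\<forall>q. path_from_to V E u v q \<longrightarrow> path_len p \<le> path_len q)"

text \<open>min^s(u ~> v): the lexicographically least shortest path from u to v.\<close>

definition min_short_path ::
  "'v set \<Rightarrow> ('v \<Rightarrow> 'v \<Rightarrow> bool) \<Rightarrow> ('v \<Rightarrow> 'v \<Rightarrow> 'v \<Rightarrow> bool) \<Rightarrow> 'v \<Rightarrow> 'v \<Rightarrow> 'v list" where
  "min_short_path V E ord u v = (THE p. shortest_path V E u v p \<and>
     (\<forall>q. shortest_path V E u v q \<and> q \<noteq> p \<longrightarrow> path_less ord p q))"

text \<open>Edge relation of S(G): u -> v is an edge iff it is an edge of min^s(v0 ~> v).
  (S(G) has the same vertex set V and distinguished vertex v0; the order on co-initial
  edges is inherited from G and plays no role for being an arborescence.)\<close>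

definition S_edges ::
  "'v set \<Rightarrow> ('v \<Rightarrow> 'v \<Rightarrow> bool) \<Rightarrow> ('v \<Rightarrow> 'v \<Rightarrow> 'v \<Rightarrow> bool) \<Rightarrow> 'v \<Rightarrow> 'v \<Rightarrow> 'v \<Rightarrow> bool" where
  "S_edges V E ord v0 u v \<longleftrightarrow> E u v \<and> v \<in> V \<and>
     (let p = min_short_path V E ord v0 v in
        \<exists>i. Suc i < length p \<and> p ! i = u \<and> p ! Suc i = v)"

definition arborescence :: "'v set \<Rightarrow> ('v \<Rightarrow> 'v \<Rightarrow> bool) \<Rightarrow> 'v \<Rightarrow> bool" where
  "arborescence V E v0 \<longleftrightarrow> v0 \<in> V \<and> (\<forall>u\<in>V. \<exists>!p. path_from_to V E v0 u p)"

end

theory Submission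
  imports Defs
begin

text \<open>A shortest path from v0 to v meets v only at its end, so the only edge of S(G) entering v
  is the last edge of min^s(v0 ~> v). Hence every v \<noteq> v0 has exactly one S-predecessor, which is
  strictly closer to v0, and v0 has none; following predecessors back from v yields a path from
  v0, and two such paths agree by induction from their common last vertex. The edge order is only
  needed to make min^s well defined: on co-initial paths of equal length the lexicographic order
  is a strict total order, so the finite nonempty set of shortest paths has a least element.\<close>

lemma is_path_prefix:
  assumes "is_path V E (q @ r)" "q \<noteq> []"
  shows "is_path V E q"
  unfolding is_path_def
proof (intro conjI allI impI)
  fix i assume i: "Suc i < length q"
  then have "E ((q @ r) ! i) ((q @ r) ! Suc i)"
    using assms(1) unfolding is_path_def by simp
  then show "E (q ! i) (q ! Suc i)"
    using i by (simp add: nth_append)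
qed (use assms in \<open>auto simp: is_path_def\<close>)

lemma is_path_edge_after_prefix:
  assumes "is_path V E (z @ a # r)" "z \<noteq> []"
  shows "E (last z) a"
proof -
  have "Suc (length z - 1) < length (z @ a # r)" using assms(2) by simp
  then have "E ((z @ a # r) ! (length z - 1)) ((z @ a # r) ! Suc (length z - 1))"
    using assms(1) by (simp add: is_path_def)
  then show ?thesis
    using assms(2) by (simp add: nth_append last_conv_nth)
qed

lemma path_from_to_in_V:
  assumes "path_from_to V E u v p"
  shows "u \<in> V" "v \<in> V"
proof -
  have "p \<noteq> []" "set p \<subseteq> V" "hd p = u" "last p = v"
    using assms by (simp_all add: path_from_to_def is_path_def)
  then show "u \<in> V" "v \<in> V"
    using hd_in_set[of p] last_in_set[of p] by auto
qed

lemma path_from_to_single: "v \<in> V \<Longrightarrow> path_from_to V E v v [v]"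
  by (simp add: path_from_to_def is_path_def)

lemma path_from_to_snoc:
  assumes "path_from_to V E u w q" "E w v" "v \<in> V"
  shows "path_from_to V E u v (q @ [v])"
  unfolding path_from_to_def is_path_def
proof (intro conjI allI impI)
  fix i assume i: "Suc i < length (q @ [v])"
  show "E ((q @ [v]) ! i) ((q @ [v]) ! Suc i)"
  proof (cases "Suc i < length q")
    case True
    then show ?thesis using assms(1) by (simp add: path_from_to_def is_path_def nth_append)
  next
    case False
    then have "i = length q - 1" "q \<noteq> []"
      using i assms(1) by (auto simp: path_from_to_def is_path_def)
    then show ?thesis
      using assms(1,2) by (simp add: path_from_to_def nth_append last_conv_nth)
  qed
qed (use assms in \<open>auto simp: path_from_to_def is_path_def\<close>)

lemma path_from_to_cases:
  assumes "path_from_to V E u v p"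
  obtains "p = [v]" "u = v"
  | q where "p = q @ [v]" "q \<noteq> []" "path_from_to V E u (last q) q" "E (last q) v"
proof -
  have "p \<noteq> []" "last p = v"
    using assms by (auto simp: path_from_to_def is_path_def)
  then obtain q where p: "p = q @ [v]"
    using append_butlast_last_id[of p, symmetric] by blast
  show ?thesis
  proof (cases "q = []")
    case True
    with p have "p = [v]" by simp
    moreover from assms this have "u = v" by (simp add: path_from_to_def)
    ultimately show ?thesis by (rule that(1))
  next
    case False
    have "is_path V E (q @ v # [])" "hd (q @ [v]) = u"
      using assms p by (simp_all add: path_from_to_def)
    then have "is_path V E q" "E (last q) v" "hd q = u"
      using is_path_prefix[OF _ False] is_path_edge_after_prefix[OF _ False]
      by (simp_all add: hd_append2[OF False])
    then show ?thesis
      using that(2)[OF p] False by (simp add: path_from_to_def)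
  qed
qed

lemma path_from_to_unique:
  assumes root: "\<And>u. \<not> F u v0"
    and unique_pred: "\<And>u u' v. F u v \<Longrightarrow> F u' v \<Longrightarrow> u = u'"
  shows "path_from_to V F v0 v p \<Longrightarrow> path_from_to V F v0 v q \<Longrightarrow> p = q"
proof (induction p arbitrary: v q rule: rev_induct)
  case Nil
  then show ?case by (simp add: path_from_to_def is_path_def)
next
  case (snoc x p)
  from snoc.prems(1) show ?case
  proof (cases rule: path_from_to_cases)
    case 1
    with snoc.prems(2) root have "q = [v0]"
      by (cases rule: path_from_to_cases) auto
    then show ?thesis using 1 by simp
  next
    case p: (2 p')
    from snoc.prems(2) show ?thesis
    proof (cases rule: path_from_to_cases)
      case 1
      then show ?thesis using p root by simp
    next
      case q: (2 q')
      have "last p' = last q'"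
        using p(4) q(4) unique_pred by blast
      then have "p' = q'"
        using snoc.IH p q by simp
      then show ?thesis using p q by simp
    qed
  qed
qed

lemma path_from_to_exists_by_rank:
  fixes rank :: "'v \<Rightarrow> nat"
  assumes "v0 \<in> V"
    and pred: "\<And>v. v \<in> V \<Longrightarrow> v \<noteq> v0 \<Longrightarrow> \<exists>u\<in>V. F u v \<and> rank u < rank v"
  shows "v \<in> V \<Longrightarrow> \<exists>p. path_from_to V F v0 v p"
proof (induction "rank v" arbitrary: v rule: less_induct)
  case less
  show ?case
  proof (cases "v = v0")
    case True
    then have "path_from_to V F v0 v [v]"
      using path_from_to_single assms(1) by simp
    then show ?thesis ..
  next
    case False
    then obtain u where "u \<in> V" "F u v" "rank u < rank v"
      using pred less.prems by blast
    then obtain p where "path_from_to V F v0 u p"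
      using less.hyps[OF \<open>rank u < rank v\<close>] by blast
    then have "path_from_to V F v0 v (p @ [v])"
      using \<open>F u v\<close> less.prems by (rule path_from_to_snoc)
    then show ?thesis ..
  qed
qed

lemma arborescenceI:
  fixes rank :: "'v \<Rightarrow> nat"
  assumes "v0 \<in> V"
    and "\<And>u. \<not> F u v0"
    and "\<And>u u' v. F u v \<Longrightarrow> F u' v \<Longrightarrow> u = u'"
    and "\<And>v. v \<in> V \<Longrightarrow> v \<noteq> v0 \<Longrightarrow> \<exists>u\<in>V. F u v \<and> rank u < rank v"
  shows "arborescence V F v0"
  unfolding arborescence_def
proof (intro conjI ballI)
  fix v assume "v \<in> V"
  then obtain p where "path_from_to V F v0 v p"
    using path_from_to_exists_by_rank[where rank = rank] assms(1,4) by blast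
  moreover have "q = p" if "path_from_to V F v0 v q" for q
    using path_from_to_unique[of F v0, OF assms(2,3) that \<open>path_from_to V F v0 v p\<close>] .
  ultimately show "\<exists>!p. path_from_to V F v0 v p" by blast
qed (rule assms(1))

lemma same_length_first_difference:
  "length p = length q \<Longrightarrow> p \<noteq> q \<Longrightarrow> \<exists>z a b r s. a \<noteq> b \<and> p = z @ a # r \<and> q = z @ b # s"
proof (induction p arbitrary: q)
  case Nil
  then show ?case by simp
next
  case (Cons x p)
  then obtain y q' where q: "q = y # q'" by (cases q) auto
  show ?case
  proof (cases "x = y")
    case True
    then have "length p = length q'" "p \<noteq> q'" using Cons.prems q by auto
    then obtain z a b r s where "a \<noteq> b" "p = z @ a # r" "q' = z @ b # s"
      using Cons.IH by blast
    then show ?thesis using q True by (metis append_Cons)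
  next
    case False
    then show ?thesis using q by (metis append_Nil)
  qed
qed

lemma append_Cons_eq_append_Cons_cases:
  assumes "z @ b # r = w @ c # s"
  obtains "z = w" "b = c" | w' where "w = z @ b # w'" | z' where "z = w @ c # z'"
proof -
  from assms obtain us where
    "(z = w @ us \<and> us @ b # r = c # s) \<or> (z @ us = w \<and> b # r = us @ c # s)"
    by (auto simp: append_eq_append_conv2)
  then show ?thesis using that by (cases us) auto
qed

lemma path_less_same_lengthE:
  assumes "path_less ord p q" "length p = length q"
  obtains z a b r s where "z \<noteq> []" "a \<noteq> b" "p = z @ a # r" "q = z @ b # s" "ord (last z) a b"
  using assms by (auto simp: path_less_def)

lemma path_less_irrefl: "\<not> path_less ord p p"
  by (auto simp: path_less_def)

lemma path_lessI:
  "z \<noteq> [] \<Longrightarrow> a \<noteq> b \<Longrightarrow> ord (last z) a b \<Longrightarrow> path_less ord (z @ a # r) (z @ b # s)"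
  unfolding path_less_def by blast

lemma finite_strict_total_ex1_least:
  assumes "finite A" "A \<noteq> {}"
    and "transp_on A R" "irreflp_on A R" "totalp_on A R"
  shows "\<exists>!m. m \<in> A \<and> (\<forall>q. q \<in> A \<and> q \<noteq> m \<longrightarrow> R m q)"
proof -
  have asym: "asymp_on A R"
    using assms(3,4) asymp_on_iff_irreflp_on_if_transp_on by blast
  obtain m where "m \<in> A" "\<forall>x\<in>A. x \<noteq> m \<longrightarrow> \<not> R x m"
    using Finite_Set.bex_min_element[OF assms(1) asym assms(3,2)] by blast
  then have least: "m \<in> A \<and> (\<forall>q. q \<in> A \<and> q \<noteq> m \<longrightarrow> R m q)"
    using assms(5) totalp_onD by metis
  then show ?thesis
    using asym asymp_onD by (metis (no_types, lifting))
qed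

lemma shortest_path_exists:
  assumes "path_from_to V E u v p"
  shows "\<exists>q. shortest_path V E u v q"
  using ex_has_least_nat[of "path_from_to V E u v" p path_len] assms
  unfolding shortest_path_def by blast

lemma shortest_path_same_length:
  assumes "shortest_path V E u v p" "shortest_path V E u v q"
  shows "length p = length q"
proof -
  have "path_len p = path_len q"
    using assms unfolding shortest_path_def by (simp add: order_antisym)
  moreover have "length p > 0" "length q > 0"
    using assms by (auto simp: shortest_path_def path_from_to_def is_path_def)
  ultimately show ?thesis
    unfolding path_len_def by linarith
qed

lemma finite_shortest_paths:
  assumes "finite V"
  shows "finite {p. shortest_path V E u v p}"
proof (cases "\<exists>p. shortest_path V E u v p")
  case True
  then obtain p where p: "shortest_path V E u v p" ..
  have "{q. shortest_path V E u v q} \<subseteq> {q. set q \<subseteq> V \<and> length q = length p}"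
    using shortest_path_same_length[OF _ p]
    by (auto simp: shortest_path_def path_from_to_def is_path_def)
  then show ?thesis
    using finite_lists_length_eq[OF assms] finite_subset by blast
qed simp

lemma shortest_path_target_not_in_butlast:
  assumes "shortest_path V E u v p"
  shows "v \<notin> set (butlast p)"
proof
  assume "v \<in> set (butlast p)"
  then obtain xs ys where "butlast p = xs @ v # ys"
    by (meson split_list)
  moreover have "p \<noteq> []"
    using assms by (simp add: shortest_path_def path_from_to_def is_path_def)
  then have "butlast p @ [last p] = p"
    by (rule append_butlast_last_id)
  ultimately obtain r where p: "p = (xs @ [v]) @ r"
    by (metis append.assoc append_Cons append_Nil)
  have "path_from_to V E u v (xs @ [v])"
    using assms is_path_prefix[of V E "xs @ [v]" r]
    by (auto simp: shortest_path_def path_from_to_def p hd_append)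
  moreover have "path_len (xs @ [v]) < path_len p"
    using arg_cong[OF \<open>butlast p = xs @ v # ys\<close>, of length] by (simp add: path_len_def)
  ultimately show False
    using assms unfolding shortest_path_def by (meson not_le)
qed

locale edge_order =
  fixes E :: "'v \<Rightarrow> 'v \<Rightarrow> bool" and ord :: "'v \<Rightarrow> 'v \<Rightarrow> 'v \<Rightarrow> bool"
  assumes ord_irrefl: "E u a \<Longrightarrow> \<not> ord u a a"
    and ord_trans: "E u a \<Longrightarrow> E u b \<Longrightarrow> E u c \<Longrightarrow> ord u a b \<Longrightarrow> ord u b c \<Longrightarrow> ord u a c"
    and ord_total: "E u a \<Longrightarrow> E u b \<Longrightarrow> a \<noteq> b \<Longrightarrow> ord u a b \<or> ord u b a"
begin

lemma path_less_trans:
  assumes "is_path V E p" "is_path V E q" "is_path V E r"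
    and "length p = length q" "length q = length r"
    and "path_less ord p q" "path_less ord q r"
  shows "path_less ord p r"
proof -
  obtain z a b r1 r2 where
    pq: "z \<noteq> []" "a \<noteq> b" "p = z @ a # r1" "q = z @ b # r2" "ord (last z) a b"
    using assms(6,4) by (rule path_less_same_lengthE)
  obtain w c d s1 s2 where
    qr: "w \<noteq> []" "c \<noteq> d" "q = w @ c # s1" "r = w @ d # s2" "ord (last w) c d"
    using assms(7,5) by (rule path_less_same_lengthE)
  from pq(4) qr(3) have "z @ b # r2 = w @ c # s1" by simp
  then show ?thesis
  proof (cases rule: append_Cons_eq_append_Cons_cases)
    case 1
    have ea: "E (last z) a" and eb: "E (last z) b" and ed: "E (last z) d"
      using is_path_edge_after_prefix[OF _ pq(1)] assms(1-3) pq(3,4) qr(4) 1 by simp_all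
    have "ord (last z) b d"
      using qr(5) 1 by simp
    then have "ord (last z) a d"
      by (rule ord_trans[OF ea eb ed pq(5)])
    moreover from this have "a \<noteq> d"
      using ord_irrefl[OF ea] by blast
    ultimately show ?thesis
      using path_lessI[of z a d ord r1 s2] pq(1,3) qr(4) 1 by simp
  next
    case (2 w')
    then have "r = z @ b # w' @ d # s2" using qr by simp
    then show ?thesis
      using path_lessI[of z a b ord r1 "w' @ d # s2"] pq by simp
  next
    case (3 z')
    then have "p = w @ c # z' @ a # r1" using pq by simp
    then show ?thesis
      using path_lessI[of w c d ord "z' @ a # r1" s2] qr by simp
  qed
qed

lemma path_less_total:
  assumes "is_path V E p" "is_path V E q"
    and "length p = length q" "hd p = hd q" "p \<noteq> q"
  shows "path_less ord p q \<or> path_less ord q p"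
proof -
  obtain z a b r s where d: "a \<noteq> b" "p = z @ a # r" "q = z @ b # s"
    using assms(3,5) same_length_first_difference by blast
  have "z \<noteq> []"
    using d assms(4) by auto
  have "E (last z) a" "E (last z) b"
    using is_path_edge_after_prefix[OF _ \<open>z \<noteq> []\<close>] assms(1,2) d(2,3) by simp_all
  then consider "ord (last z) a b" | "ord (last z) b a"
    using ord_total d(1) by blast
  then show ?thesis
  proof cases
    case 1
    then show ?thesis using path_lessI[of z a b ord r s] \<open>z \<noteq> []\<close> d by simp
  next
    case 2
    then show ?thesis using path_lessI[of z b a ord s r] \<open>z \<noteq> []\<close> d by simp
  qed
qed

lemma min_short_path_shortest:
  assumes "finite V" "path_from_to V E u v p"
  shows "shortest_path V E u v (min_short_path V E ord u v)"
proof -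
  let ?A = "{p. shortest_path V E u v p}"
  have paths: "is_path V E p" "hd p = u" if "p \<in> ?A" for p
    using that by (auto simp: shortest_path_def path_from_to_def)
  have same_length: "length p = length q" if "p \<in> ?A" "q \<in> ?A" for p q
    using that shortest_path_same_length[of V E u v p q] by simp
  have "\<exists>!m. m \<in> ?A \<and> (\<forall>q. q \<in> ?A \<and> q \<noteq> m \<longrightarrow> path_less ord m q)"
  proof (rule finite_strict_total_ex1_least)
    show "finite ?A" using finite_shortest_paths[OF assms(1)] .
    show "?A \<noteq> {}" using shortest_path_exists[OF assms(2)] by blast
    show "transp_on ?A (path_less ord)"
    proof (rule transp_onI)
      fix p q r assume A: "p \<in> ?A" "q \<in> ?A" "r \<in> ?A"
      show "path_less ord p q \<Longrightarrow> path_less ord q r \<Longrightarrow> path_less ord p r"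
        using path_less_trans[OF paths(1)[OF A(1)] paths(1)[OF A(2)] paths(1)[OF A(3)]
            same_length[OF A(1,2)] same_length[OF A(2,3)]] .
    qed
    show "irreflp_on ?A (path_less ord)"
      by (rule irreflp_onI) (rule path_less_irrefl)
    show "totalp_on ?A (path_less ord)"
    proof (rule totalp_onI)
      fix p q assume A: "p \<in> ?A" "q \<in> ?A"
      show "p \<noteq> q \<Longrightarrow> path_less ord p q \<or> path_less ord q p"
        using path_less_total[OF paths(1)[OF A(1)] paths(1)[OF A(2)] same_length[OF A]]
          paths(2)[OF A(1)] paths(2)[OF A(2)] by simp
    qed
  qed
  then have "\<exists>!m. shortest_path V E u v m \<and>
      (\<forall>q. shortest_path V E u v q \<and> q \<noteq> m \<longrightarrow> path_less ord m q)"
    by simp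
  then show ?thesis
    unfolding min_short_path_def by (rule theI'[THEN conjunct1])
qed

end

lemma edge_order_if_finite_edge_ordered_graph:
  "finite_edge_ordered_graph V E ord \<Longrightarrow> edge_order E ord"
  unfolding finite_edge_ordered_graph_def edge_order_def by blast

locale connected_edge_ordered_graph = edge_order E ord
  for V :: "'v set" and E :: "'v \<Rightarrow> 'v \<Rightarrow> bool" and ord :: "'v \<Rightarrow> 'v \<Rightarrow> 'v \<Rightarrow> bool" +
  fixes v0 :: 'v
  assumes finite_V: "finite V"
    and root_in_V: "v0 \<in> V"
    and connected: "connected_from V E v0"
begin

definition parent :: "'v \<Rightarrow> 'v" where
  "parent v = last (butlast (min_short_path V E ord v0 v))"

definition depth :: "'v \<Rightarrow> nat" where
  "depth v = path_len (min_short_path V E ord v0 v)"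

lemma shortest_min_short_path:
  "v \<in> V \<Longrightarrow> shortest_path V E v0 v (min_short_path V E ord v0 v)"
  using connected min_short_path_shortest[OF finite_V] unfolding connected_from_def by blast

lemma min_short_path_cases:
  assumes "v \<in> V"
  obtains "min_short_path V E ord v0 v = [v0]" "v = v0"
  | q where "min_short_path V E ord v0 v = q @ [v]" "q \<noteq> []" "v \<notin> set q"
      "path_from_to V E v0 (parent v) q" "E (parent v) v"
proof -
  have sp: "shortest_path V E v0 v (min_short_path V E ord v0 v)"
    using shortest_min_short_path[OF assms] .
  then have "path_from_to V E v0 v (min_short_path V E ord v0 v)"
    by (simp add: shortest_path_def)
  then show ?thesis
  proof (cases rule: path_from_to_cases)
    case 1
    then show ?thesis
      using that(1) by blast
  next
    case (2 q)
    have "v \<notin> set q"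
      using shortest_path_target_not_in_butlast[OF sp] 2(1) by simp
    moreover have "parent v = last q"
      using 2(1) by (simp add: parent_def)
    ultimately show ?thesis
      using that(2)[OF 2(1,2)] 2(3,4) by simp
  qed
qed

lemma parent_in_V_and_depth_less:
  assumes "v \<in> V" "v \<noteq> v0"
  shows "parent v \<in> V" "depth (parent v) < depth v"
proof -
  obtain q where q: "min_short_path V E ord v0 v = q @ [v]" "path_from_to V E v0 (parent v) q"
    using min_short_path_cases[OF assms(1)] assms(2) by metis
  show "parent v \<in> V"
    using path_from_to_in_V(2)[OF q(2)] .
  then have "depth (parent v) \<le> path_len q"
    using shortest_min_short_path q(2) unfolding depth_def shortest_path_def by blast
  also have "\<dots> < depth v"
    using q by (simp add: depth_def path_len_def path_from_to_def is_path_def)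
  finally show "depth (parent v) < depth v" .
qed

lemma S_edges_iff: "S_edges V E ord v0 u v \<longleftrightarrow> v \<in> V \<and> v \<noteq> v0 \<and> u = parent v"
proof
  assume "S_edges V E ord v0 u v"
  then obtain i where "v \<in> V" and i: "Suc i < length (min_short_path V E ord v0 v)"
    "min_short_path V E ord v0 v ! i = u" "min_short_path V E ord v0 v ! Suc i = v"
    unfolding S_edges_def Let_def by blast
  from \<open>v \<in> V\<close> show "v \<in> V \<and> v \<noteq> v0 \<and> u = parent v"
  proof (cases rule: min_short_path_cases)
    case 1
    then show ?thesis using i(1) by simp
  next
    case (2 q)
    have "\<not> Suc i < length q"
      using i(3) 2(1,3) by (auto simp: nth_append)
    then have "i = length q - 1"
      using i(1) 2(1) by simp
    then have "u = parent v"
      using i(2) 2 by (simp add: nth_append last_conv_nth path_from_to_def)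
    moreover have "v \<noteq> v0"
      using 2(2-4) hd_in_set by (fastforce simp: path_from_to_def)
    ultimately show ?thesis
      using \<open>v \<in> V\<close> by simp
  qed
next
  assume "v \<in> V \<and> v \<noteq> v0 \<and> u = parent v"
  then have "v \<in> V" "v \<noteq> v0" "u = parent v" by simp_all
  from \<open>v \<in> V\<close> show "S_edges V E ord v0 u v"
  proof (cases rule: min_short_path_cases)
    case 1
    then show ?thesis using \<open>v \<noteq> v0\<close> by simp
  next
    case (2 q)
    have "Suc (length q - 1) < length (q @ [v])" "(q @ [v]) ! (length q - 1) = u"
      "(q @ [v]) ! Suc (length q - 1) = v"
      using 2 \<open>u = parent v\<close> by (simp_all add: nth_append last_conv_nth path_from_to_def)
    then show ?thesis
      unfolding S_edges_def Let_def using 2 \<open>v \<in> V\<close> \<open>u = parent v\<close> by metis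
  qed
qed

end

theorem lemma10p5:
  fixes V :: "'v set" and E :: "'v \<Rightarrow> 'v \<Rightarrow> bool" and ord :: "'v \<Rightarrow> 'v \<Rightarrow> 'v \<Rightarrow> bool"
    and v0 :: 'v
  assumes "finite_edge_ordered_graph V E ord"
    and "v0 \<in> V"
    and "connected_from V E v0"
  shows "arborescence V (S_edges V E ord v0) v0"
proof -
  interpret connected_edge_ordered_graph V E ord v0
  proof (rule connected_edge_ordered_graph.intro)
    show "edge_order E ord"
      using assms(1) by (rule edge_order_if_finite_edge_ordered_graph)
    show "connected_edge_ordered_graph_axioms V E v0"
      using assms by (simp add: connected_edge_ordered_graph_axioms_def finite_edge_ordered_graph_def)
  qed
  show ?thesis
  proof (rule arborescenceI[where rank = depth])
    show "v0 \<in> V" by (rule root_in_V)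
    show "\<And>u. \<not> S_edges V E ord v0 u v0"
      by (simp add: S_edges_iff)
    show "\<And>u u' v. S_edges V E ord v0 u v \<Longrightarrow> S_edges V E ord v0 u' v \<Longrightarrow> u = u'"
      by (simp add: S_edges_iff)
    show "\<exists>u\<in>V. S_edges V E ord v0 u v \<and> depth u < depth v" if "v \<in> V" "v \<noteq> v0" for v
      using parent_in_V_and_depth_less[OF that] that by (auto simp: S_edges_iff)
  qed
qed

end
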